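(* As $r\to0$, $\zeta_0(r)=\frac2\pi+O(r^2)$ and $\zeta_2(r)=\frac2\pi+O(r^2)$. As $r\to\infty$, $\zeta_0(r)=\frac{A_0}{r}(1+O(1/r^2))$ and $\zeta_2(r)=\frac{A_2}{r^3}(1+O(1/r^2))$.
   Context: $\phi(t)=\frac{1}{\sqrt{2\pi}}e^{-t^2/2}$, $Q(x)=\int_x^\infty\phi(t)dt$, $\xi(s):=\frac{\phi^2(s)}{Q(s)(1-Q(s))}$, and $\zeta_k(t):=\mathbb{E}[S^k\xi(tS)]$ for $S\sim\mathcal{N}(0,1)$. $A_0:=\frac{1}{\sqrt{2\pi}}\int_{-\infty}^{\infty}\xi(u)du$ and $A_2:=\frac{1}{\sqrt{2\pi}}\int_{-\infty}^{\infty}\xi(u)u^2du$. *)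

theory Defs
  imports "HOL-Analysis.Analysis" "HOL-Library.Landau_Symbols"
begin

definition phi :: "real \<Rightarrow> real" where
  "phi t = exp (- (t^2) / 2) / sqrt (2 * pi)"

definition Q :: "real \<Rightarrow> real" where
  "Q x = (LINT t:{x..}|lborel. phi t)"

definition xi :: "real \<Rightarrow> real" where
  "xi s = (phi s)^2 / (Q s * (1 - Q s))"

definition zeta :: "nat \<Rightarrow> real \<Rightarrow> real" where
  "zeta k t = (LINT s|lborel. s ^ k * xi (t * s) * phi s)"

definition A0 :: real where
  "A0 = 1 / sqrt (2 * pi) * (LINT u|lborel. xi u)"

definition A2 :: real where
  "A2 = 1 / sqrt (2 * pi) * (LINT u|lborel. xi u * u^2)"

end

theory Submission
  imports Defs "HOL-Probability.Probability"
begin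

(* xi is positive and bounded; near 0 it is 2/pi + O(s^2), because phi(0)^2 = 1/(2 pi), Q(0) = 1/2
   and |Q s - 1/2| <= |s|/sqrt(2 pi); at infinity it decays like exp(-s^2/4), because
   Q s * Q(-s) >= phi(|s|+1)/2.  For small r, integrating |xi(r s) - 2/pi| <= C r^2 s^2 against the
   normal density gives zeta_k(r) = (2/pi) E[S^k] + O(r^2).  For large r, the substitution u = r s gives
   zeta_k(r) = r^-(k+1) (2 pi)^(-1/2) \<integral> xi(u) u^k exp(-u^2/(2 r^2)) du, and |exp(-x) - 1| <= x
   bounds the relative error by a multiple of 1/r^2, the k-th moment of xi being positive for even k. *)

lemma phi_eq_std_normal_density: "phi = std_normal_density"
  by (rule ext) (simp add: phi_def std_normal_density_def)

lemma phi_measurable [measurable]: "phi \<in> borel_measurable borel"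
  by (simp add: phi_eq_std_normal_density)

lemma phi_pos: "0 < phi t"
  by (simp add: phi_def)

lemma phi_minus: "phi (- t) = phi t"
  by (simp add: phi_def)

lemma phi_le: "phi t \<le> 1 / sqrt (2 * pi)"
  by (simp add: phi_def divide_right_mono)

lemma phi_abs_antimono: "\<bar>s\<bar> \<le> \<bar>t\<bar> \<Longrightarrow> phi t \<le> phi s"
  unfolding phi_def by (intro divide_right_mono) (auto simp: abs_le_square_iff)

lemma phi_squared: "(phi t)\<^sup>2 = exp (- t\<^sup>2) / (2 * pi)"
proof -
  have "(exp (- t\<^sup>2 / 2))\<^sup>2 = exp (- t\<^sup>2)"
    by (simp add: power2_eq_square exp_add[symmetric])
  then show ?thesis
    by (simp add: phi_def power_divide)
qed

lemma integrable_phi_moment: "integrable lborel (\<lambda>s. s ^ k * phi s)"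
  using integrable_std_normal_moment[of k] by (simp add: phi_eq_std_normal_density mult.commute)

lemma integrable_phi_abs_moment: "integrable lborel (\<lambda>s. \<bar>s\<bar> ^ k * phi s)"
  using integrable_std_normal_moment_abs[of k] by (simp add: phi_eq_std_normal_density mult.commute)

lemma set_integrable_phi: "A \<in> sets borel \<Longrightarrow> set_integrable lborel A phi"
  unfolding set_integrable_def
  using integrable_mult_indicator[of A lborel phi] by (simp add: phi_eq_std_normal_density)

lemma set_integrable_const_Ico: "set_integrable lborel {x..<y :: real} (\<lambda>_. c :: real)"
proof -
  have "emeasure lborel {x..<y} < \<top>"
    by (cases "x \<le> y") auto
  then show ?thesis
    unfolding set_integrable_def by (intro integrable_scaleR_left integrable_real_indicator) simp_all
qed

lemma set_integral_phi_nonneg: "0 \<le> (LINT t:A|lborel. phi t)"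
  unfolding set_lebesgue_integral_def
  by (intro Bochner_Integration.integral_nonneg) (simp add: less_imp_le[OF phi_pos])

lemma set_integral_phi_Ico_le:
  assumes "x \<le> y"
  shows "(LINT t:{x..<y}|lborel. phi t) \<le> (y - x) / sqrt (2 * pi)"
proof -
  have "(LINT t:{x..<y}|lborel. phi t) \<le> (LINT t:{x..<y}|lborel. 1 / sqrt (2 * pi))"
    by (intro set_integral_mono set_integrable_phi set_integrable_const_Ico phi_le) simp
  also have "\<dots> = (y - x) / sqrt (2 * pi)"
    using assms by (simp add: set_integral_const)
  finally show ?thesis .
qed

lemma set_integral_phi_Ico_ge:
  assumes "0 \<le> x" "x \<le> y"
  shows "(y - x) * phi y \<le> (LINT t:{x..<y}|lborel. phi t)"
proof -
  have "(y - x) * phi y = (LINT t:{x..<y}|lborel. phi y)"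
    using assms by (simp add: set_integral_const)
  also have "\<dots> \<le> (LINT t:{x..<y}|lborel. phi t)"
    using assms
    by (intro set_integral_mono set_integrable_phi set_integrable_const_Ico phi_abs_antimono) auto
  finally show ?thesis .
qed

lemma Q_split:
  assumes "x \<le> y"
  shows "Q x = (LINT t:{x..<y}|lborel. phi t) + Q y"
proof -
  have "{x..} = {x..<y} \<union> {y..}" "{x..<y} \<inter> {y..} = {}"
    using assms by auto
  then show ?thesis
    unfolding Q_def by (simp add: set_integral_Un set_integrable_phi)
qed

lemma Q_nonneg: "0 \<le> Q x"
  unfolding Q_def by (rule set_integral_phi_nonneg)

lemma Q_antimono: "x \<le> y \<Longrightarrow> Q y \<le> Q x"
  using Q_split set_integral_phi_nonneg by (metis le_add_same_cancel2)

lemma Q_minus: "Q (- x) = 1 - Q x"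
proof -
  have "{t. - t \<in> {- x..}} = {..x}"
    by auto
  then have "Q (- x) = (LINT t:{..x}|lborel. phi t)"
    unfolding Q_def by (subst set_integral_reflect) (simp add: phi_minus)
  moreover have "(LINT t:{..x}|lborel. phi t) + Q x = (LINT t:{..x} \<union> {x..}|lborel. phi t)"
    unfolding Q_def using AE_lborel_singleton[of x]
    by (intro set_integral_Un_AE[symmetric] set_integrable_phi) (auto elim!: eventually_mono)
  moreover have "{..x} \<union> {x..} = UNIV"
    by auto
  then have "(LINT t:{..x} \<union> {x..}|lborel. phi t) = 1"
    by (simp add: set_lebesgue_integral_def phi_eq_std_normal_density)
  ultimately show ?thesis
    by simp
qed

lemma Q_zero: "Q 0 = 1 / 2"
  using Q_minus[of 0] by simp

lemma Q_near_half: "\<bar>Q x - 1 / 2\<bar> \<le> \<bar>x\<bar> / sqrt (2 * pi)"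
proof -
  have "\<bar>Q y - 1 / 2\<bar> \<le> y / sqrt (2 * pi)" if "0 \<le> y" for y
    using Q_split[OF that] Q_zero set_integral_phi_Ico_le[OF that] set_integral_phi_nonneg[of "{0..<y}"]
    by (simp add: abs_le_iff)
  from this[of x] this[of "- x"] show ?thesis
    by (cases "0 \<le> x") (simp_all add: Q_minus abs_minus_commute)
qed

lemma Q_ge_phi: "0 \<le> x \<Longrightarrow> phi (x + 1) \<le> Q x"
  using Q_split[of x "x + 1"] set_integral_phi_Ico_ge[of x "x + 1"] Q_nonneg[of "x + 1"] by simp

lemma Q_pos: "0 < Q x"
proof (cases "0 \<le> x")
  case True
  then show ?thesis
    using Q_ge_phi phi_pos by (metis less_le_trans)
next
  case False
  then show ?thesis
    using Q_antimono[of x 0] Q_zero by simp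
qed

lemma Q_measurable [measurable]: "Q \<in> borel_measurable borel"
proof -
  have "(\<lambda>x. - Q x) \<in> borel_measurable borel"
    by (rule borel_measurable_mono) (simp add: mono_def Q_antimono)
  then have "(\<lambda>x. - (- Q x)) \<in> borel_measurable borel"
    by (rule borel_measurable_uminus)
  then show ?thesis
    by simp
qed

lemma xi_measurable [measurable]: "xi \<in> borel_measurable borel"
  unfolding xi_def[abs_def] by measurable

lemma xi_eq: "xi s = (phi s)\<^sup>2 / (Q s * Q (- s))"
  by (simp add: xi_def Q_minus)

lemma xi_pos: "0 < xi s"
  unfolding xi_eq using phi_pos[of s] Q_pos[of s] Q_pos[of "- s"] by simp

lemma Q_product_ge: "phi (\<bar>s\<bar> + 1) / 2 \<le> Q s * Q (- s)"
proof -
  have "phi (t + 1) / 2 \<le> Q t * Q (- t)" if "0 \<le> t" for t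
  proof -
    have "1 / 2 \<le> Q (- t)"
      using Q_antimono[of "- t" 0] Q_zero that by simp
    then have "phi (t + 1) * (1 / 2) \<le> Q t * Q (- t)"
      using Q_ge_phi[OF that] phi_pos Q_nonneg by (intro mult_mono) auto
    then show ?thesis
      by simp
  qed
  from this[of s] this[of "- s"] show ?thesis
    by (cases "0 \<le> s") (simp_all add: mult.commute)
qed

lemma xi_le_gaussian: "xi s \<le> 2 * exp (3 / 2) / sqrt (2 * pi) * exp (- s\<^sup>2 / 4)"
proof -
  have "xi s \<le> (phi s)\<^sup>2 / (phi (\<bar>s\<bar> + 1) / 2)"
    unfolding xi_eq using Q_product_ge phi_pos Q_pos by (intro divide_left_mono) auto
  also have "\<dots> = 2 / sqrt (2 * pi) * (exp (- s\<^sup>2) / exp (- (\<bar>s\<bar> + 1)\<^sup>2 / 2))"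
    unfolding phi_squared by (simp add: phi_def field_simps flip: real_sqrt_mult)
  also have "\<dots> = 2 / sqrt (2 * pi) * exp (- s\<^sup>2 + (\<bar>s\<bar> + 1)\<^sup>2 / 2)"
    by (simp add: exp_diff[symmetric])
  also have "\<dots> \<le> 2 / sqrt (2 * pi) * exp (3 / 2 - s\<^sup>2 / 4)"
  proof -
    have "0 \<le> (\<bar>s\<bar> / 2 - 1)\<^sup>2"
      by simp
    then have "- s\<^sup>2 + (\<bar>s\<bar> + 1)\<^sup>2 / 2 \<le> 3 / 2 - s\<^sup>2 / 4"
      by (simp add: power2_eq_square algebra_simps)
    then show ?thesis
      by (intro mult_left_mono) auto
  qed
  also have "\<dots> = 2 * exp (3 / 2) / sqrt (2 * pi) * exp (- s\<^sup>2 / 4)"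
    by (simp add: exp_add[symmetric])
  finally show ?thesis .
qed

lemma xi_bounded:
  obtains B where "\<And>s. xi s \<le> B"
proof
  fix s :: real
  have "xi s \<le> 2 * exp (3 / 2) / sqrt (2 * pi) * exp (- s\<^sup>2 / 4)"
    by (rule xi_le_gaussian)
  also have "\<dots> \<le> 2 * exp (3 / 2) / sqrt (2 * pi) * 1"
    by (intro mult_left_mono) auto
  finally show "xi s \<le> 2 * exp (3 / 2) / sqrt (2 * pi)"
    by simp
qed

lemma integrable_xi_moment: "integrable lborel (\<lambda>u. xi u * u ^ k)"
proof (rule Bochner_Integration.integrable_bound)
  define C where "C = 2 * exp (3 / 2) / sqrt (2 * pi) * sqrt (4 * pi)"
  show "integrable lborel (\<lambda>u. C * (normal_density 0 (sqrt 2) u * \<bar>u - 0\<bar> ^ k))"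
    by (intro integrable_mult_right integrable_normal_moment_abs) simp
  show "AE u in lborel. norm (xi u * u ^ k) \<le> norm (C * (normal_density 0 (sqrt 2) u * \<bar>u - 0\<bar> ^ k))"
  proof (intro AE_I2)
    fix u :: real
    have "norm (xi u * u ^ k) = xi u * \<bar>u\<bar> ^ k"
      using xi_pos[of u] by (simp add: abs_mult power_abs)
    also have "\<dots> \<le> 2 * exp (3 / 2) / sqrt (2 * pi) * exp (- u\<^sup>2 / 4) * \<bar>u\<bar> ^ k"
      by (intro mult_right_mono xi_le_gaussian) auto
    also have "\<dots> = norm (C * (normal_density 0 (sqrt 2) u * \<bar>u - 0\<bar> ^ k))"
      by (simp add: C_def normal_density_def abs_mult)
    finally show "norm (xi u * u ^ k) \<le> norm (C * (normal_density 0 (sqrt 2) u * \<bar>u - 0\<bar> ^ k))" .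
  qed
qed simp

lemma integrable_xi_abs_moment: "integrable lborel (\<lambda>u. xi u * \<bar>u\<bar> ^ k)"
  using integrable_abs[OF integrable_xi_moment[of k]] by (simp add: abs_mult power_abs abs_of_pos xi_pos)

lemma xi_moment_pos:
  assumes "even k"
  shows "0 < (\<integral>u. xi u * u ^ k \<partial>lborel)"
proof -
  have nonneg: "0 \<le> xi u * u ^ k" for u
    using xi_pos[of u] assms by (simp add: zero_le_even_power)
  have "(\<integral>u. xi u * u ^ k \<partial>lborel) \<noteq> 0"
  proof
    assume "(\<integral>u. xi u * u ^ k \<partial>lborel) = 0"
    then have "AE u in lborel. xi u * u ^ k = 0"
      using integral_nonneg_eq_0_iff_AE[OF integrable_xi_moment] nonneg by simp
    then have "AE u in lborel. u = (0 :: real)"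
      by eventually_elim (metis mult_eq_0_iff power_eq_0_iff xi_pos less_irrefl)
    from eventually_conj[OF this AE_lborel_singleton[of 0]] have "ae_filter (lborel :: real measure) = bot"
      by (simp add: eventually_False)
    then have "emeasure (lborel :: real measure) UNIV = 0"
      by (simp add: ae_filter_eq_bot_iff)
    then show False
      by simp
  qed
  moreover have "0 \<le> (\<integral>u. xi u * u ^ k \<partial>lborel)"
    using nonneg by (rule Bochner_Integration.integral_nonneg)
  ultimately show ?thesis
    by simp
qed

lemma xi_near_zero_local:
  assumes "s\<^sup>2 \<le> 1 / 2"
  shows "\<bar>xi s - 2 / pi\<bar> \<le> 8 * s\<^sup>2"
proof -
  define d where "d = Q s - 1 / 2"
  define D where "D = Q s * Q (- s)"
  have D_eq: "D = 1 / 4 - d\<^sup>2"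
    unfolding D_def d_def by (simp add: Q_minus power2_eq_square algebra_simps)
  have d: "d\<^sup>2 \<le> s\<^sup>2 / (2 * pi)"
    using power_mono[OF Q_near_half[of s] abs_ge_zero, of 2]
    by (simp add: d_def power_divide)
  have "s\<^sup>2 / (2 * pi) \<le> 1 / 12"
    using assms pi_gt3 by (simp add: field_simps)
  then have D_ge: "1 / 8 \<le> D"
    using D_eq d by linarith
  have "xi s - 2 / pi = ((phi s)\<^sup>2 - 2 / pi * D) / D"
    using D_ge unfolding xi_eq D_def[symmetric] by (simp add: diff_divide_distrib)
  also have "(phi s)\<^sup>2 - 2 / pi * D = (exp (- s\<^sup>2) - 1) / (2 * pi) + 2 / pi * d\<^sup>2"
    by (simp add: phi_squared D_eq diff_divide_distrib right_diff_distrib)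
  finally have xi_eq_D: "xi s - 2 / pi = ((exp (- s\<^sup>2) - 1) / (2 * pi) + 2 / pi * d\<^sup>2) / D" .
  have six_pi: "s\<^sup>2 / (2 * pi) \<le> s\<^sup>2 / 6"
    using pi_gt3 by (intro divide_left_mono) auto
  have "\<bar>exp (- s\<^sup>2) - 1\<bar> \<le> s\<^sup>2"
    using exp_ge_add_one_self[of "- s\<^sup>2"] by (simp add: abs_if)
  then have "\<bar>(exp (- s\<^sup>2) - 1) / (2 * pi)\<bar> \<le> s\<^sup>2 / (2 * pi)"
    by (simp add: abs_divide divide_right_mono)
  then have "\<bar>(exp (- s\<^sup>2) - 1) / (2 * pi)\<bar> \<le> s\<^sup>2 / 6"
    using six_pi by linarith
  moreover have "2 / pi * d\<^sup>2 \<le> 1 * d\<^sup>2"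
    using pi_gt3 by (intro mult_right_mono) auto
  then have "2 / pi * d\<^sup>2 \<le> s\<^sup>2 / 6"
    using d six_pi by simp
  moreover have "0 \<le> 2 / pi * d\<^sup>2"
    by simp
  ultimately have "\<bar>(exp (- s\<^sup>2) - 1) / (2 * pi) + 2 / pi * d\<^sup>2\<bar> \<le> s\<^sup>2"
    by (simp only: abs_le_iff) linarith
  then have "\<bar>xi s - 2 / pi\<bar> \<le> s\<^sup>2 / D"
    using D_ge unfolding xi_eq_D by (simp add: abs_divide divide_right_mono)
  also have "\<dots> \<le> s\<^sup>2 / (1 / 8)"
    using D_ge by (intro divide_left_mono) auto
  finally show ?thesis
    by simp
qed

lemma xi_near_zero:
  obtains C where "\<And>s. \<bar>xi s - 2 / pi\<bar> \<le> C * s\<^sup>2"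
proof -
  obtain B where B: "\<And>s. xi s \<le> B"
    using xi_bounded by blast
  define C where "C = max 8 (2 * (B + 1))"
  have "\<bar>xi s - 2 / pi\<bar> \<le> C * s\<^sup>2" for s
  proof (cases "s\<^sup>2 \<le> 1 / 2")
    case True
    have "8 * s\<^sup>2 \<le> C * s\<^sup>2"
      by (intro mult_right_mono) (auto simp: C_def)
    then show ?thesis
      using xi_near_zero_local[OF True] by linarith
  next
    case False
    have B_pos: "0 < B"
      using B[of s] xi_pos[of s] by linarith
    have "0 < 2 / pi" "2 / pi \<le> 1"
      using pi_gt3 by auto
    then have "\<bar>xi s - 2 / pi\<bar> \<le> B + 1"
      using B[of s] xi_pos[of s] by linarith
    also have "\<dots> \<le> (B + 1) * (2 * s\<^sup>2)"
      using mult_left_mono[of 1 "2 * s\<^sup>2" "B + 1"] False B_pos by simp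
    also have "\<dots> = 2 * (B + 1) * s\<^sup>2"
      by simp
    also have "\<dots> \<le> C * s\<^sup>2"
      by (intro mult_right_mono) (auto simp: C_def)
    finally show ?thesis .
  qed
  then show thesis
    using that by blast
qed

lemma integrable_zeta_integrand: "integrable lborel (\<lambda>s. s ^ k * xi (r * s) * phi s)"
proof -
  obtain B where B: "\<And>s. xi s \<le> B"
    using xi_bounded by blast
  show ?thesis
  proof (rule Bochner_Integration.integrable_bound)
    show "integrable lborel (\<lambda>s. B * (\<bar>s\<bar> ^ k * phi s))"
      by (intro integrable_mult_right integrable_phi_abs_moment)
    show "AE s in lborel. norm (s ^ k * xi (r * s) * phi s) \<le> norm (B * (\<bar>s\<bar> ^ k * phi s))"
    proof (intro AE_I2)
      fix s :: real
      have "norm (s ^ k * xi (r * s) * phi s) = \<bar>s\<bar> ^ k * xi (r * s) * phi s"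
        using xi_pos[of "r * s"] phi_pos[of s] by (simp add: abs_mult power_abs)
      also have "\<dots> \<le> \<bar>s\<bar> ^ k * \<bar>B\<bar> * phi s"
        using order_trans[OF B abs_ge_self] phi_pos[of s] by (intro mult_right_mono mult_left_mono) auto
      also have "\<dots> = norm (B * (\<bar>s\<bar> ^ k * phi s))"
        using phi_pos[of s] by (simp add: abs_mult)
      finally show "norm (s ^ k * xi (r * s) * phi s) \<le> norm (B * (\<bar>s\<bar> ^ k * phi s))" .
    qed
  qed simp
qed

lemma zeta_minus_normal_moment_bigo:
  "(\<lambda>r. zeta k r - 2 / pi * (\<integral>s. s ^ k * phi s \<partial>lborel)) \<in> O[F](\<lambda>r. r\<^sup>2)"
proof -
  obtain C where C: "\<And>s. \<bar>xi s - 2 / pi\<bar> \<le> C * s\<^sup>2"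
    using xi_near_zero by blast
  define M where "M = (\<integral>s. \<bar>s\<bar> ^ (k + 2) * phi s \<partial>lborel)"
  have "\<bar>zeta k r - 2 / pi * (\<integral>s. s ^ k * phi s \<partial>lborel)\<bar> \<le> C * M * r\<^sup>2" for r
  proof -
    have "zeta k r - 2 / pi * (\<integral>s. s ^ k * phi s \<partial>lborel)
        = (\<integral>s. s ^ k * xi (r * s) * phi s - 2 / pi * (s ^ k * phi s) \<partial>lborel)"
      unfolding zeta_def using integrable_zeta_integrand[of k r] integrable_phi_moment[of k]
      by (simp add: Bochner_Integration.integral_diff)
    also have "\<bar>\<dots>\<bar> \<le> (\<integral>s. C * r\<^sup>2 * (\<bar>s\<bar> ^ (k + 2) * phi s) \<partial>lborel)"
    proof (rule integral_abs_bound_integral)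
      show "integrable lborel (\<lambda>s. s ^ k * xi (r * s) * phi s - 2 / pi * (s ^ k * phi s))"
        by (intro Bochner_Integration.integrable_diff integrable_mult_right integrable_zeta_integrand
            integrable_phi_moment)
      show "integrable lborel (\<lambda>s. C * r\<^sup>2 * (\<bar>s\<bar> ^ (k + 2) * phi s))"
        by (intro integrable_mult_right integrable_phi_abs_moment)
      fix s :: real
      have "s ^ k * xi (r * s) * phi s - 2 / pi * (s ^ k * phi s) = s ^ k * phi s * (xi (r * s) - 2 / pi)"
        by (simp add: algebra_simps)
      then have "\<bar>s ^ k * xi (r * s) * phi s - 2 / pi * (s ^ k * phi s)\<bar> = \<bar>s\<bar> ^ k * phi s * \<bar>xi (r * s) - 2 / pi\<bar>"
        using phi_pos[of s] by (simp add: abs_mult power_abs)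
      also have "\<dots> \<le> \<bar>s\<bar> ^ k * phi s * (C * (r * s)\<^sup>2)"
        using C phi_pos[of s] by (intro mult_left_mono) auto
      also have "\<dots> = C * r\<^sup>2 * (\<bar>s\<bar> ^ (k + 2) * phi s)"
        by (simp add: power_add power_mult_distrib power2_eq_square)
      finally show "\<bar>s ^ k * xi (r * s) * phi s - 2 / pi * (s ^ k * phi s)\<bar> \<le> C * r\<^sup>2 * (\<bar>s\<bar> ^ (k + 2) * phi s)" .
    qed
    also have "\<dots> = C * M * r\<^sup>2"
      by (simp add: M_def)
    finally show ?thesis .
  qed
  then show ?thesis
    by (intro bigoI[where c = "C * M"]) simp
qed

lemma zeta_rescaled:
  assumes "0 < r"
  shows "zeta k r = (\<integral>u. xi u * u ^ k * exp (- (u / r)\<^sup>2 / 2) \<partial>lborel) / (sqrt (2 * pi) * r ^ (k + 1))"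
proof -
  have "zeta k r = \<bar>1 / r\<bar> *\<^sub>R (\<integral>u. (0 + 1 / r * u) ^ k * xi (r * (0 + 1 / r * u)) * phi (0 + 1 / r * u) \<partial>lborel)"
    unfolding zeta_def using assms by (intro lborel_integral_real_affine) simp
  also have "\<dots> = 1 / r * (\<integral>u. 1 / (sqrt (2 * pi) * r ^ k) * (xi u * u ^ k * exp (- (u / r)\<^sup>2 / 2)) \<partial>lborel)"
    using assms by (simp add: phi_def power_divide field_simps)
  also have "\<dots> = (\<integral>u. xi u * u ^ k * exp (- (u / r)\<^sup>2 / 2) \<partial>lborel) / (sqrt (2 * pi) * r ^ (k + 1))"
    by simp
  finally show ?thesis .
qed

lemma xi_damped_moment_error:
  assumes "0 < r"
  shows "\<bar>(\<integral>u. xi u * u ^ k * exp (- (u / r)\<^sup>2 / 2) \<partial>lborel) - (\<integral>u. xi u * u ^ k \<partial>lborel)\<bar>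
    \<le> (\<integral>u. xi u * \<bar>u\<bar> ^ (k + 2) \<partial>lborel) / (2 * r\<^sup>2)"
proof -
  have integrable_damped: "integrable lborel (\<lambda>u. xi u * u ^ k * exp (- (u / r)\<^sup>2 / 2))"
  proof (rule Bochner_Integration.integrable_bound[OF integrable_xi_moment[of k]])
    show "AE u in lborel. norm (xi u * u ^ k * exp (- (u / r)\<^sup>2 / 2)) \<le> norm (xi u * u ^ k)"
      by (intro AE_I2) (simp add: abs_mult mult_left_le)
  qed simp
  have "\<bar>(\<integral>u. xi u * u ^ k * exp (- (u / r)\<^sup>2 / 2) \<partial>lborel) - (\<integral>u. xi u * u ^ k \<partial>lborel)\<bar>
      = \<bar>\<integral>u. xi u * u ^ k * (exp (- (u / r)\<^sup>2 / 2) - 1) \<partial>lborel\<bar>"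
    using integrable_damped integrable_xi_moment[of k]
    by (simp add: algebra_simps flip: Bochner_Integration.integral_diff)
  also have "\<dots> \<le> (\<integral>u. 1 / (2 * r\<^sup>2) * (xi u * \<bar>u\<bar> ^ (k + 2)) \<partial>lborel)"
  proof (rule integral_abs_bound_integral)
    show "integrable lborel (\<lambda>u. xi u * u ^ k * (exp (- (u / r)\<^sup>2 / 2) - 1))"
      using integrable_damped integrable_xi_moment[of k] by (simp add: algebra_simps)
    show "integrable lborel (\<lambda>u. 1 / (2 * r\<^sup>2) * (xi u * \<bar>u\<bar> ^ (k + 2)))"
      by (intro integrable_mult_right integrable_xi_abs_moment)
    fix u :: real
    have "\<bar>exp (- (u / r)\<^sup>2 / 2) - 1\<bar> \<le> (u / r)\<^sup>2 / 2"
      using exp_ge_add_one_self[of "- (u / r)\<^sup>2 / 2"] by (simp add: abs_if)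
    then have "\<bar>xi u * u ^ k * (exp (- (u / r)\<^sup>2 / 2) - 1)\<bar> \<le> xi u * \<bar>u\<bar> ^ k * ((u / r)\<^sup>2 / 2)"
      using xi_pos[of u] by (simp add: abs_mult power_abs mult_left_mono)
    also have "\<dots> = 1 / (2 * r\<^sup>2) * (xi u * \<bar>u\<bar> ^ (k + 2))"
      by (simp add: power_add power_divide power2_eq_square abs_mult_self_eq mult_ac)
    finally show "\<bar>xi u * u ^ k * (exp (- (u / r)\<^sup>2 / 2) - 1)\<bar> \<le> 1 / (2 * r\<^sup>2) * (xi u * \<bar>u\<bar> ^ (k + 2))" .
  qed
  also have "\<dots> = (\<integral>u. xi u * \<bar>u\<bar> ^ (k + 2) \<partial>lborel) / (2 * r\<^sup>2)"
    by simp
  finally show ?thesis .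
qed

lemma zeta_asymptotics_at_top:
  assumes "(\<integral>u. xi u * u ^ k \<partial>lborel) \<noteq> 0"
  shows "\<exists>h. h \<in> O[at_top](\<lambda>r. 1 / r\<^sup>2) \<and>
    (\<forall>\<^sub>F r in at_top. zeta k r = (\<integral>u. xi u * u ^ k \<partial>lborel) / sqrt (2 * pi) / r ^ (k + 1) * (1 + h r))"
proof -
  define I where "I = (\<integral>u. xi u * u ^ k \<partial>lborel)"
  define E where "E r = (\<integral>u. xi u * u ^ k * exp (- (u / r)\<^sup>2 / 2) \<partial>lborel)" for r
  define h where "h r = E r / I - 1" for r
  have "h \<in> O[at_top](\<lambda>r. 1 / r\<^sup>2)"
  proof (rule bigoI)
    show "\<forall>\<^sub>F r in at_top. norm (h r) \<le> (\<integral>u. xi u * \<bar>u\<bar> ^ (k + 2) \<partial>lborel) / (2 * \<bar>I\<bar>) * norm (1 / r\<^sup>2)"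
      using eventually_gt_at_top[of 0]
    proof eventually_elim
      case (elim r)
      have "h r = (E r - I) / I"
        using assms unfolding h_def I_def by (simp add: diff_divide_distrib)
      then have "norm (h r) = \<bar>E r - I\<bar> / \<bar>I\<bar>"
        by (simp add: abs_divide)
      also have "\<dots> \<le> (\<integral>u. xi u * \<bar>u\<bar> ^ (k + 2) \<partial>lborel) / (2 * r\<^sup>2) / \<bar>I\<bar>"
        unfolding E_def I_def using xi_damped_moment_error[OF elim] by (intro divide_right_mono) auto
      finally show ?case
        by (simp add: field_simps)
    qed
  qed
  moreover have "\<forall>\<^sub>F r in at_top. zeta k r = I / sqrt (2 * pi) / r ^ (k + 1) * (1 + h r)"
    using eventually_gt_at_top[of 0]
  proof eventually_elim
    case (elim r)
    then show ?case
      using assms by (simp add: zeta_rescaled[OF elim] h_def E_def I_def)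
  qed
  ultimately show ?thesis
    unfolding I_def by blast
qed

theorem lemma6:
  shows "(\<lambda>r. zeta 0 r - 2 / pi) \<in> O[at_right 0](\<lambda>r. r^2) \<and>
         (\<lambda>r. zeta 2 r - 2 / pi) \<in> O[at_right 0](\<lambda>r. r^2) \<and>
         (\<exists>h. h \<in> O[at_top](\<lambda>r. 1 / r^2) \<and>
           (\<forall>\<^sub>F r in at_top. zeta 0 r = A0 / r * (1 + h r))) \<and>
         (\<exists>h. h \<in> O[at_top](\<lambda>r. 1 / r^2) \<and>
           (\<forall>\<^sub>F r in at_top. zeta 2 r = A2 / r^3 * (1 + h r)))"
proof (intro conjI)
  have moment0: "(\<integral>s. phi s \<partial>lborel) = 1"
    by (simp add: phi_eq_std_normal_density)
  have moment2: "(\<integral>s. s ^ 2 * phi s \<partial>lborel) = 1"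
    using integral_std_normal_moment_even[of 1] by (simp add: phi_eq_std_normal_density mult.commute)
  show "(\<lambda>r. zeta 0 r - 2 / pi) \<in> O[at_right 0](\<lambda>r. r^2)"
    using zeta_minus_normal_moment_bigo[of 0] by (simp add: moment0)
  show "(\<lambda>r. zeta 2 r - 2 / pi) \<in> O[at_right 0](\<lambda>r. r^2)"
    using zeta_minus_normal_moment_bigo[of 2] by (simp add: moment2)
  show "\<exists>h. h \<in> O[at_top](\<lambda>r. 1 / r^2) \<and> (\<forall>\<^sub>F r in at_top. zeta 0 r = A0 / r * (1 + h r))"
    using zeta_asymptotics_at_top[of 0] xi_moment_pos[of 0] by (simp add: A0_def)
  show "\<exists>h. h \<in> O[at_top](\<lambda>r. 1 / r^2) \<and> (\<forall>\<^sub>F r in at_top. zeta 2 r = A2 / r^3 * (1 + h r))"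
    using zeta_asymptotics_at_top[of 2] xi_moment_pos[of 2] by (simp add: A2_def)
qed

end
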